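(* Fix $J=(J_1,J_2)\in\mathbb{R}^2$ and let $S(J)=\{m\in\{1,2,3,4\}: U_m(J)=\min\{U_1(J),U_2(J),U_3(J),U_4(J)\}\}$ and $\mathcal{C}_{S(J)}=\bigcup_{m\in S(J)}\mathcal{C}_m$. Suppose that for every unit ball $b$, every configuration $\sigma_b$ on $b$ belonging to $\mathcal{C}_{S(J)}$ and every unit ball $b'$ neighbouring $b$, there exists exactly one configuration $\sigma'_{b'}$ on $b'$ belonging to $\mathcal{C}_{S(J)}$ that is compatible with $\sigma_b$. Then every ground state $a$ (equivalently, every periodic $a$ with $a_b\in\mathcal{C}_{S(J)}$ for all unit balls $b$) has period not exceeding 2.
   Context: $G_2$ is the free product of three cyclic groups of order two with generators $a_1,a_2,a_3$, identified with the vertex set $V$ of the Cayley tree of order 2 ($g,h$ adjacent iff $h=ga_i$ for some $i$); $d$ is the graph distance. A configuration $\sigma:V\to\{-1,1\}$ is periodic if there is a finite-index subgroup $G^*\subset G_2$ with $\sigma(gh)=\sigma(h)$ for all $g\in G^*,h\in G_2$; it has period not exceeding 2 if such a subgroup of index at most 2 exists. A unit ball is $b=\{y:d(x,y)\le1\}$ (center $x$ and three leaves); $a_b$ is the restriction to $b$. Two distinct unit balls are neighbours if they share an edge; configurations on neighbouring balls are compatible if they coincide on the endpoints of the common edge. A configuration on a unit ball belongs to $\mathcal{C}_1,\mathcal{C}_2,\mathcal{C}_4,\mathcal{C}_3$ according as exactly $3,2,1,0$ of its leaves carry the same value as its center. $U_1(J)=\tfrac32J_1+3J_2$, $U_2(J)=\tfrac12J_1-J_2$,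 $U_3(J)=-\tfrac32J_1+3J_2$, $U_4(J)=-\tfrac12J_1-J_2$ are the values on $\mathcal{C}_1,\dots,\mathcal{C}_4$ of the ball energy $U(\sigma_b)=\tfrac12J_1\sum_{\langle x,y\rangle:\,x,y\in b}\sigma(x)\sigma(y)+J_2\sum_{\{x,y\}\subset b:\,d(x,y)=2}\sigma(x)\sigma(y)$. A ground state is a periodic configuration $a$ with $U(a_b)=\min\{U_1(J),\dots,U_4(J)\}$ for every unit ball $b$. *)

theory Defs
  imports Complex_Main "HOL-Algebra.Coset" "HOL-Library.FuncSet"
begin

text \<open>Generators a1, a2, a3 of G2 = Z2 * Z2 * Z2. Elements of G2 are reduced words
 (no two consecutive equal letters); the empty word is the identity.\<close>

datatype gen = A1 | A2 | A3

fun reduced :: "gen list \<Rightarrow> bool" where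
  "reduced [] = True"
| "reduced [a] = True"
| "reduced (a # b # w) = (a \<noteq> b \<and> reduced (b # w))"

definition V :: "gen list set" where
  "V = {w. reduced w}"

definition rmul :: "gen list \<Rightarrow> gen \<Rightarrow> gen list" where
  "rmul g a = (if g \<noteq> [] \<and> last g = a then butlast g else g @ [a])"

definition gmul :: "gen list \<Rightarrow> gen list \<Rightarrow> gen list" where
  "gmul g h = foldl rmul g h"

definition G2 :: "gen list monoid" where
  "G2 = \<lparr>carrier = V, mult = gmul, one = []\<rparr>"

text \<open>Graph distance on the Cayley tree: length of the reduced word g^{-1} h.\<close>
definition tdist :: "gen list \<Rightarrow> gen list \<Rightarrow> nat" where
  "tdist g h = length (gmul (rev g) h)"

definition adjacent :: "gen list \<Rightarrow> gen list \<Rightarrow> bool" where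
  "adjacent g h \<longleftrightarrow> (\<exists>a. h = gmul g [a])"

definition unit_ball :: "gen list \<Rightarrow> gen list set" where
  "unit_ball x = {y \<in> V. tdist x y \<le> 1}"

definition invariant_under :: "gen list set \<Rightarrow> (gen list \<Rightarrow> int) \<Rightarrow> bool" where
  "invariant_under H \<sigma> \<longleftrightarrow> (\<forall>g\<in>H. \<forall>h\<in>V. \<sigma> (gmul g h) = \<sigma> h)"

definition periodic :: "(gen list \<Rightarrow> int) \<Rightarrow> bool" where
  "periodic \<sigma> \<longleftrightarrow> (\<exists>H. subgroup H G2 \<and> finite (rcosets\<^bsub>G2\<^esub> H) \<and> invariant_under H \<sigma>)"

definition period_le_2 :: "(gen list \<Rightarrow> int) \<Rightarrow> bool" where
  "period_le_2 \<sigma> \<longleftrightarrow> (\<exists>H. subgroup H G2 \<and> finite (rcosets\<^bsub>G2\<^esub> H)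
       \<and> card (rcosets\<^bsub>G2\<^esub> H) \<le> 2 \<and> invariant_under H \<sigma>)"

definition U :: "nat \<Rightarrow> real \<Rightarrow> real \<Rightarrow> real" where
  "U m J1 J2 = (if m = 1 then 3/2 * J1 + 3 * J2
           else if m = 2 then 1/2 * J1 - J2
           else if m = 3 then - 3/2 * J1 + 3 * J2
           else - 1/2 * J1 - J2)"

definition Umin :: "real \<Rightarrow> real \<Rightarrow> real" where
  "Umin J1 J2 = Min ((\<lambda>m. U m J1 J2) ` {1,2,3,4})"

definition S :: "real \<Rightarrow> real \<Rightarrow> nat set" where
  "S J1 J2 = {m \<in> {1,2,3,4}. U m J1 J2 = Umin J1 J2}"

definition same_leaves :: "(gen list \<Rightarrow> int) \<Rightarrow> gen list \<Rightarrow> nat" where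
  "same_leaves \<sigma> x = card {y \<in> unit_ball x - {x}. \<sigma> y = \<sigma> x}"

definition in_class :: "nat \<Rightarrow> (gen list \<Rightarrow> int) \<Rightarrow> gen list \<Rightarrow> bool" where
  "in_class m \<sigma> x \<longleftrightarrow> same_leaves \<sigma> x =
     (if m = 1 then 3 else if m = 2 then 2 else if m = 3 then 0 else 1)"

definition in_CS :: "real \<Rightarrow> real \<Rightarrow> (gen list \<Rightarrow> int) \<Rightarrow> gen list \<Rightarrow> bool" where
  "in_CS J1 J2 \<sigma> x \<longleftrightarrow> (\<exists>m\<in>S J1 J2. in_class m \<sigma> x)"

definition ball_energy :: "real \<Rightarrow> real \<Rightarrow> (gen list \<Rightarrow> int) \<Rightarrow> gen list \<Rightarrow> real" where
  "ball_energy J1 J2 \<sigma> x =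
     1/2 * J1 * (\<Sum>e\<in>{{u, v} | u v. u \<in> unit_ball x \<and> v \<in> unit_ball x \<and> tdist u v = 1}.
                    \<Prod>w\<in>e. real_of_int (\<sigma> w))
   + J2 * (\<Sum>e\<in>{{u, v} | u v. u \<in> unit_ball x \<and> v \<in> unit_ball x \<and> tdist u v = 2}.
                    \<Prod>w\<in>e. real_of_int (\<sigma> w))"

definition ground_state :: "real \<Rightarrow> real \<Rightarrow> (gen list \<Rightarrow> int) \<Rightarrow> bool" where
  "ground_state J1 J2 a \<longleftrightarrow> a \<in> V \<rightarrow> {-1, 1} \<and> periodic a
      \<and> (\<forall>x\<in>V. ball_energy J1 J2 a x = Umin J1 J2)"

end

theory Submission
  imports Defs
begin

(* Under the unique-extension hypothesis neither C_2 nor C_4 meets C_S(J): a configuration of either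
   class on the ball at the identity has two compatible continuations to the ball at a_1, differing
   by a swap of the values at the leaves a_1 a_2 and a_1 a_3. Since a ball configuration of class C_m
   has energy U_m, every ball configuration of a ground state lies in C_S(J), hence in C_1 or C_3,
   so the three leaves x a_i of each ball carry the same value. Then the value at a word depends only
   on the parity of its length, i.e. the ground state is invariant under the index-2 subgroup of
   words of even length. *)

lemma UNIV_gen: "(UNIV :: gen set) = {A1, A2, A3}"
  using gen.exhaust by auto

lemma card_Collect_gen: "card {p :: gen. P p} = length (filter P [A1, A2, A3])"
proof -
  have "P p \<longleftrightarrow> p \<in> set (filter P [A1, A2, A3])" for p
    by (cases p) auto
  then have "{p. P p} = set (filter P [A1, A2, A3])"
    by blast
  then show ?thesis
    by (simp add: distinct_card)
qed

lemma reduced_snoc: "reduced (xs @ [a]) \<longleftrightarrow> reduced xs \<and> (xs = [] \<or> last xs \<noteq> a)"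
  by (induction xs rule: reduced.induct) auto

lemma reduced_butlast: "reduced xs \<Longrightarrow> reduced (butlast xs)"
  by (induction xs rule: rev_induct) (auto simp: reduced_snoc)

lemma reduced_rev: "reduced xs \<Longrightarrow> reduced (rev xs)"
proof (induction xs rule: reduced.induct)
  case (3 a b w)
  then have "reduced (rev w @ [b])"
    by simp
  then show ?case
    using 3 by (simp only: rev.simps reduced_snoc) (auto simp: last_rev)
qed auto

lemma reduced_rmul: "reduced x \<Longrightarrow> reduced (rmul x a)"
  by (auto simp: rmul_def reduced_butlast reduced_snoc)

lemma rmul_rmul: "reduced x \<Longrightarrow> rmul (rmul x a) a = x"
  by (cases x rule: rev_cases) (auto simp: rmul_def reduced_snoc butlast_append)

lemma rmul_inject: "rmul x p = rmul x q \<Longrightarrow> p = q"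
  by (auto simp: rmul_def split: if_splits dest: arg_cong[of _ _ length])

lemma rmul_neq: "rmul x p \<noteq> x"
  by (cases x rule: rev_cases) (auto simp: rmul_def)

lemma even_length_rmul: "even (length (rmul x a)) \<longleftrightarrow> odd (length x)"
  by (cases x) (auto simp: rmul_def)

lemma gmul_Nil [simp]: "gmul x [] = x"
  by (simp add: gmul_def)

lemma gmul_snoc: "gmul x (ys @ [a]) = rmul (gmul x ys) a"
  by (simp add: gmul_def)

lemma gmul_single: "gmul x [a] = rmul x a"
  by (simp add: gmul_def)

lemma reduced_gmul: "reduced x \<Longrightarrow> reduced (gmul x y)"
  by (induction y rule: rev_induct) (auto simp: gmul_snoc reduced_rmul)

lemma even_length_gmul: "even (length (gmul x y)) \<longleftrightarrow> even (length x + length y)"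
  by (induction y rule: rev_induct) (auto simp: gmul_snoc even_length_rmul)

lemma gmul_Nil_left: "reduced y \<Longrightarrow> gmul [] y = y"
  by (induction y rule: rev_induct) (auto simp: gmul_snoc rmul_def reduced_snoc)

lemma gmul_rmul:
  assumes "reduced x" "reduced y"
  shows "gmul x (rmul y a) = rmul (gmul x y) a"
proof (cases "y \<noteq> [] \<and> last y = a")
  case True
  then obtain z where z: "y = z @ [a]"
    by (metis append_butlast_last_id)
  have "gmul x (rmul y a) = gmul x z"
    using z by (simp add: rmul_def)
  also have "\<dots> = rmul (rmul (gmul x z) a) a"
    using assms by (simp add: rmul_rmul reduced_gmul)
  finally show ?thesis
    using z by (simp add: gmul_snoc)
next
  case False
  then have "rmul y a = y @ [a]"
    by (auto simp: rmul_def)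
  then show ?thesis
    by (simp add: gmul_snoc)
qed

lemma gmul_assoc: "reduced x \<Longrightarrow> reduced y \<Longrightarrow> gmul x (gmul y z) = gmul (gmul x y) z"
  by (induction z rule: rev_induct) (auto simp: gmul_snoc gmul_rmul reduced_gmul)

lemma gmul_gmul_rev: "reduced x \<Longrightarrow> gmul (gmul x h) (rev h) = x"
proof (induction h arbitrary: x)
  case (Cons b h)
  have "gmul (gmul x (b # h)) (rev (b # h)) = rmul (gmul (gmul (rmul x b) h) (rev h)) b"
    by (simp add: gmul_def)
  also have "\<dots> = x"
    using Cons by (simp add: reduced_rmul rmul_rmul)
  finally show ?case .
qed simp

lemma gmul_rev_self: "reduced x \<Longrightarrow> gmul (rev x) x = []"
  using gmul_gmul_rev[of "[]" "rev x"] gmul_Nil_left[OF reduced_rev[of x]] by simp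

lemma carrier_G2 [simp]: "carrier G2 = V"
  and mult_G2 [simp]: "x \<otimes>\<^bsub>G2\<^esub> y = gmul x y"
  and one_G2 [simp]: "\<one>\<^bsub>G2\<^esub> = []"
  by (simp_all add: G2_def)

lemma group_G2: "group G2"
proof (rule groupI)
  show "\<exists>y\<in>carrier G2. y \<otimes>\<^bsub>G2\<^esub> x = \<one>\<^bsub>G2\<^esub>" if "x \<in> carrier G2" for x
    using that by (intro bexI[of _ "rev x"]) (auto simp: V_def gmul_rev_self reduced_rev)
qed (auto simp: V_def reduced_gmul gmul_assoc gmul_Nil_left)

interpretation G2: group G2
  by (rule group_G2)

lemma inv_G2: "x \<in> V \<Longrightarrow> inv\<^bsub>G2\<^esub> x = rev x"
  by (rule G2.inv_equality) (auto simp: V_def gmul_rev_self reduced_rev)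

lemma tdist_eq: "u \<in> V \<Longrightarrow> tdist u v = length (inv\<^bsub>G2\<^esub> u \<otimes>\<^bsub>G2\<^esub> v)"
  by (simp add: tdist_def inv_G2)

lemma tdist_translate:
  assumes "x \<in> V" "u \<in> V" "v \<in> V"
  shows "tdist (gmul x u) (gmul x v) = tdist u v"
proof -
  have "inv\<^bsub>G2\<^esub> (x \<otimes>\<^bsub>G2\<^esub> u) \<otimes>\<^bsub>G2\<^esub> (x \<otimes>\<^bsub>G2\<^esub> v) = inv\<^bsub>G2\<^esub> u \<otimes>\<^bsub>G2\<^esub> v"
    using assms unfolding carrier_G2[symmetric]
    by (simp add: G2.inv_mult_group G2.m_assoc flip: G2.m_assoc[of "inv\<^bsub>G2\<^esub> x"]
        del: mult_G2 carrier_G2 one_G2)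
  moreover have "gmul x u \<in> V"
    using assms by (simp add: V_def reduced_gmul)
  ultimately show ?thesis
    using assms by (simp add: tdist_eq)
qed

lemma tdist_self: "u \<in> V \<Longrightarrow> tdist u u = 0"
  by (simp add: tdist_def gmul_rev_self V_def)

lemma tdist_rmul:
  assumes "x \<in> V"
  shows "tdist x (rmul x p) = 1" "tdist (rmul x p) x = 1"
    and "tdist (rmul x p) (rmul x q) = (if p = q then 0 else 2)"
  using assms tdist_translate[of x "[]" "[p]"] tdist_translate[of x "[p]" "[]"]
    tdist_translate[of x "[p]" "[q]"]
  by (cases p; cases q; simp add: gmul_single V_def tdist_def gmul_def rmul_def)+

lemma unit_ball_eq:
  assumes x: "x \<in> V"
  shows "unit_ball x = insert x (range (rmul x))"
proof (intro equalityI subsetI)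
  fix y assume "y \<in> unit_ball x"
  then have y: "y \<in> V" and "length (gmul (rev x) y) \<le> 1"
    by (auto simp: unit_ball_def tdist_def)
  then consider "gmul (rev x) y = []" | p where "gmul (rev x) y = [p]"
    by (cases "gmul (rev x) y") auto
  moreover have "gmul x (gmul (rev x) y) = y"
    using x y gmul_rev_self[of "rev x"]
    by (simp add: V_def gmul_assoc reduced_rev gmul_Nil_left)
  ultimately show "y \<in> insert x (range (rmul x))"
    by cases (auto simp: gmul_single)
next
  fix y assume "y \<in> insert x (range (rmul x))"
  then show "y \<in> unit_ball x"
    using x by (auto simp: unit_ball_def tdist_self tdist_rmul V_def reduced_rmul)
qed

lemma unit_ball_eq_leaves:
  "x \<in> V \<Longrightarrow> unit_ball x = {x, rmul x A1, rmul x A2, rmul x A3}"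
  by (simp add: unit_ball_eq UNIV_gen)

lemma same_leaves_eq_count:
  assumes "x \<in> V"
  shows "same_leaves \<sigma> x = length (filter (\<lambda>p. \<sigma> (rmul x p) = \<sigma> x) [A1, A2, A3])"
proof -
  have "{y \<in> unit_ball x - {x}. \<sigma> y = \<sigma> x} = rmul x ` {p. \<sigma> (rmul x p) = \<sigma> x}"
    using assms rmul_neq by (auto simp: unit_ball_eq)
  also have "card \<dots> = card {p. \<sigma> (rmul x p) = \<sigma> x}"
    by (rule card_image) (auto intro: inj_onI rmul_inject)
  finally show ?thesis
    by (simp add: same_leaves_def card_Collect_gen)
qed

lemma unit_ball_edges:
  assumes x: "x \<in> V"
  shows "{{u, v} | u v. u \<in> unit_ball x \<and> v \<in> unit_ball x \<and> tdist u v = 1}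
           = {{x, rmul x A1}, {x, rmul x A2}, {x, rmul x A3}}" (is "?E = _")
proof (intro equalityI subsetI)
  have V: "rmul x p \<in> V" for p
    using x by (simp add: V_def reduced_rmul)
  fix e assume "e \<in> ?E"
  then show "e \<in> {{x, rmul x A1}, {x, rmul x A2}, {x, rmul x A3}}"
    using x V by (auto simp: unit_ball_eq_leaves tdist_self tdist_rmul insert_commute)
next
  fix e assume "e \<in> {{x, rmul x A1}, {x, rmul x A2}, {x, rmul x A3}}"
  then obtain p where "e = {x, rmul x p}"
    by blast
  moreover have "x \<in> unit_ball x" "rmul x p \<in> unit_ball x" "tdist x (rmul x p) = 1"
    using x by (auto simp: unit_ball_eq tdist_rmul)
  ultimately show "e \<in> ?E"
    by blast
qed

lemma unit_ball_distance_two_pairs: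
  assumes x: "x \<in> V"
  shows "{{u, v} | u v. u \<in> unit_ball x \<and> v \<in> unit_ball x \<and> tdist u v = 2}
           = {{rmul x A1, rmul x A2}, {rmul x A1, rmul x A3}, {rmul x A2, rmul x A3}}"
    (is "?E = ?R")
proof (intro equalityI subsetI)
  have V: "rmul x p \<in> V" for p
    using x by (simp add: V_def reduced_rmul)
  fix e assume "e \<in> ?E"
  then show "e \<in> ?R"
    using x V by (auto simp: unit_ball_eq_leaves tdist_self tdist_rmul insert_commute)
next
  fix e assume "e \<in> ?R"
  then obtain p q where "e = {rmul x p, rmul x q}" "p \<noteq> q"
    by blast
  moreover have "rmul x p \<in> unit_ball x" "rmul x q \<in> unit_ball x"
    using x by (auto simp: unit_ball_eq)
  moreover have "p \<noteq> q \<Longrightarrow> tdist (rmul x p) (rmul x q) = 2"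
    using x by (simp add: tdist_rmul)
  ultimately show "e \<in> ?E"
    by blast
qed

lemma ball_energy_eq:
  fixes \<sigma> :: "gen list \<Rightarrow> int"
  assumes x: "x \<in> V"
  defines "c \<equiv> real_of_int (\<sigma> x)" and "l p \<equiv> real_of_int (\<sigma> (rmul x p))"
  shows "ball_energy J1 J2 \<sigma> x =
    1/2 * J1 * (c * l A1 + c * l A2 + c * l A3) + J2 * (l A1 * l A2 + l A1 * l A3 + l A2 * l A3)"
proof -
  have "x \<noteq> rmul x p" "p \<noteq> q \<Longrightarrow> rmul x p \<noteq> rmul x q" for p q
    using rmul_neq rmul_inject by metis+
  then show ?thesis
    unfolding ball_energy_def unit_ball_edges[OF x] unit_ball_distance_two_pairs[OF x] c_def l_def
    by (simp add: doubleton_eq_iff add.assoc)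
qed

lemma ball_energy_eq_U:
  assumes x: "x \<in> V" and spins: "\<sigma> ` unit_ball x \<subseteq> {-1, 1}" and "in_class m \<sigma> x"
  shows "ball_energy J1 J2 \<sigma> x = U m J1 J2"
proof -
  have "\<sigma> x \<in> {-1, 1}" "\<sigma> (rmul x A1) \<in> {-1, 1}" "\<sigma> (rmul x A2) \<in> {-1, 1}"
    "\<sigma> (rmul x A3) \<in> {-1, 1}"
    using x spins by (auto simp: unit_ball_eq)
  then show ?thesis
    using assms(3) unfolding ball_energy_eq[OF x] in_class_def same_leaves_eq_count[OF x]
    by (auto simp: U_def split: if_splits)
qed

lemma in_class_exists:
  assumes "x \<in> V"
  shows "\<exists>m\<in>{1, 2, 3, 4}. in_class m \<sigma> x"
proof -
  have "same_leaves \<sigma> x \<le> 3"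
    using assms by (simp add: same_leaves_eq_count)
  then show ?thesis
    by (auto simp: in_class_def)
qed

lemma ground_state_in_CS:
  assumes gs: "ground_state J1 J2 a" and x: "x \<in> V"
  shows "in_CS J1 J2 a x"
proof -
  obtain m where m: "m \<in> {1, 2, 3, 4}" "in_class m a x"
    using in_class_exists[OF x] by blast
  have "a ` unit_ball x \<subseteq> {-1, 1}"
    using gs by (auto simp: ground_state_def unit_ball_def)
  then have "U m J1 J2 = Umin J1 J2"
    using gs x m by (simp add: ball_energy_eq_U[symmetric] ground_state_def)
  then show ?thesis
    using m by (auto simp: in_CS_def S_def)
qed

lemma leaves_agree_if_C1_or_C3:
  assumes x: "x \<in> V" and spins: "\<sigma> ` unit_ball x \<subseteq> {-1, 1}"
    and "in_class 1 \<sigma> x \<or> in_class 3 \<sigma> x"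
  shows "\<sigma> (rmul x p) = \<sigma> (rmul x q)"
proof -
  have "\<sigma> x \<in> {-1, 1}" "\<sigma> (rmul x A1) \<in> {-1, 1}" "\<sigma> (rmul x A2) \<in> {-1, 1}"
    "\<sigma> (rmul x A3) \<in> {-1, 1}"
    using x spins by (auto simp: unit_ball_eq)
  then show ?thesis
    using assms(3) unfolding in_class_def same_leaves_eq_count[OF x]
    by (cases p; cases q) (auto split: if_splits)
qed

definition unique_extension_property :: "real \<Rightarrow> real \<Rightarrow> bool" where
  "unique_extension_property J1 J2 \<longleftrightarrow>
     (\<forall>x\<in>V. \<forall>\<sigma>\<in>unit_ball x \<rightarrow>\<^sub>E {-1, 1}. in_CS J1 J2 \<sigma> x \<longrightarrow>
        (\<forall>y\<in>V. adjacent x y \<longrightarrow>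
           (\<exists>!\<tau>. \<tau> \<in> unit_ball y \<rightarrow>\<^sub>E {-1, 1} \<and> in_CS J1 J2 \<tau> y
                  \<and> \<tau> x = \<sigma> x \<and> \<tau> y = \<sigma> y)))"

lemma not_unique_extension_if_C2_or_C4:
  assumes "m \<in> S J1 J2" and "m = 2 \<or> m = 4"
  shows "\<not> unique_extension_property J1 J2"
proof
  assume uniq: "unique_extension_property J1 J2"
  \<comment> \<open>With c = 1 all three configurations below lie in C_2, with c = -1 in C_4.\<close>
  define c :: int where "c = (if m = 2 then 1 else -1)"
  define \<sigma> :: "gen list \<Rightarrow> int" where
    "\<sigma> = restrict (\<lambda>z. if z = [A1] then c else if z = [A3] then -1 else 1) (unit_ball [])"
  define \<tau> :: "gen \<Rightarrow> gen list \<Rightarrow> int" where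
    "\<tau> p = restrict (\<lambda>z. if z = [A1] then c else if z = [A1, p] then -1 else 1) (unit_ball [A1])"
    for p
  have V: "[] \<in> V" "[A1] \<in> V"
    by (simp_all add: V_def)
  have "in_class m \<sigma> []" "in_class m (\<tau> A2) [A1]" "in_class m (\<tau> A3) [A1]"
    using assms(2) V
    by (auto simp: in_class_def same_leaves_eq_count \<sigma>_def \<tau>_def c_def unit_ball_eq_leaves rmul_def)
  then have CS: "in_CS J1 J2 \<sigma> []" "in_CS J1 J2 (\<tau> A2) [A1]" "in_CS J1 J2 (\<tau> A3) [A1]"
    using assms(1) by (auto simp: in_CS_def)
  have spins: "\<sigma> \<in> unit_ball [] \<rightarrow>\<^sub>E {-1, 1}" "\<tau> p \<in> unit_ball [A1] \<rightarrow>\<^sub>E {-1, 1}" for p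
    by (auto simp: \<sigma>_def \<tau>_def c_def)
  have compatible: "\<tau> p [] = \<sigma> []" "\<tau> p [A1] = \<sigma> [A1]" for p
    using V by (simp_all add: \<sigma>_def \<tau>_def unit_ball_eq_leaves rmul_def)
  have "\<tau> A2 [A1, A2] \<noteq> \<tau> A3 [A1, A2]"
    using V by (simp add: \<tau>_def unit_ball_eq_leaves rmul_def)
  then have "\<tau> A2 \<noteq> \<tau> A3"
    by metis
  have adjacent: "adjacent [] [A1]"
    by (auto simp: adjacent_def gmul_single rmul_def)
  have "\<exists>!\<tau>'. \<tau>' \<in> unit_ball [A1] \<rightarrow>\<^sub>E {-1, 1} \<and> in_CS J1 J2 \<tau>' [A1]
                 \<and> \<tau>' [] = \<sigma> [] \<and> \<tau>' [A1] = \<sigma> [A1]"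
    by (rule uniq[unfolded unique_extension_property_def, rule_format,
          OF V(1) spins(1) CS(1) V(2) adjacent])
  with \<open>\<tau> A2 \<noteq> \<tau> A3\<close> show False
    using spins(2) CS(2,3) compatible by blast
qed

lemma determined_by_parity:
  assumes leaves: "\<forall>x\<in>V. \<forall>p q. a (rmul x p) = a (rmul x q)" and u: "u \<in> V"
  shows "a u = a (if even (length u) then [] else [A1])"
proof -
  let ?rep = "\<lambda>n::nat. if even n then [] else [A1]"
  \<comment> \<open>Strengthened to the neighbours of u: then a (u q p) = a (u q q) = a u closes the step.\<close>
  have "reduced u \<longrightarrow> a u = a (?rep (length u)) \<and> (\<forall>p. a (rmul u p) = a (?rep (Suc (length u))))"
  proof (induction u rule: rev_induct)
    case Nil
    have "a [p] = a [A1]" for p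
      using leaves[rule_format, of "[]" p A1] by (simp add: V_def rmul_def)
    then show ?case
      by (simp add: rmul_def)
  next
    case (snoc q u)
    show ?case
    proof
      assume "reduced (u @ [q])"
      then have u: "reduced u" and uq: "rmul u q = u @ [q]"
        by (auto simp: reduced_snoc rmul_def)
      have "a (rmul (u @ [q]) p) = a u" for p
        using leaves[rule_format, of "rmul u q" p q] u
        by (simp add: V_def reduced_rmul rmul_rmul flip: uq)
      moreover have "a u = a (?rep (length u))" "a (rmul u q) = a (?rep (Suc (length u)))"
        using snoc.IH u by auto
      ultimately show "a (u @ [q]) = a (?rep (length (u @ [q])))
                 \<and> (\<forall>p. a (rmul (u @ [q]) p) = a (?rep (Suc (length (u @ [q])))))"
        by (simp add: uq)
    qed
  qed
  then show ?thesis
    using u by (simp add: V_def)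
qed

lemma period_le_2_if_determined_by_parity:
  assumes "\<forall>u\<in>V. a u = f (even (length u))"
  shows "period_le_2 a"
proof -
  define H where "H = {w \<in> V. even (length w)}"
  have "subgroup H G2"
  proof (rule G2.subgroupI)
    show "H \<subseteq> carrier G2" "H \<noteq> {}"
      by (auto simp: H_def V_def intro!: exI[of _ "[]"])
    show "inv\<^bsub>G2\<^esub> x \<in> H" if "x \<in> H" for x
      using that by (auto simp: H_def inv_G2 V_def reduced_rev)
    show "x \<otimes>\<^bsub>G2\<^esub> y \<in> H" if "x \<in> H" "y \<in> H" for x y
      using that by (auto simp: H_def V_def reduced_gmul even_length_gmul)
  qed
  have "H #>\<^bsub>G2\<^esub> x = {w \<in> V. even (length w) = even (length x)}" if x: "x \<in> V" for x
  proof (intro equalityI subsetI)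
    fix w assume "w \<in> H #>\<^bsub>G2\<^esub> x"
    then show "w \<in> {w \<in> V. even (length w) = even (length x)}"
      using x by (auto simp: r_coset_def H_def V_def reduced_gmul even_length_gmul)
  next
    fix w assume w: "w \<in> {w \<in> V. even (length w) = even (length x)}"
    then have "w = gmul (gmul w (rev x)) x" and "gmul w (rev x) \<in> H"
      using x gmul_rev_self[of x]
      by (auto simp: H_def V_def reduced_gmul even_length_gmul reduced_rev simp flip: gmul_assoc)
    then show "w \<in> H #>\<^bsub>G2\<^esub> x"
      by (auto simp: r_coset_def)
  qed
  then have cosets: "rcosets\<^bsub>G2\<^esub> H \<subseteq> range (\<lambda>b. {w \<in> V. even (length w) = b})"
    by (auto simp: RCOSETS_def)
  then have "finite (rcosets\<^bsub>G2\<^esub> H)"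
    by (rule finite_subset) simp
  moreover have "card (rcosets\<^bsub>G2\<^esub> H) \<le> 2"
    using card_mono[OF _ cosets] card_image_le[of UNIV "\<lambda>b. {w \<in> V. even (length w) = b}"]
    by simp
  moreover have "invariant_under H a"
    using assms by (auto simp: invariant_under_def H_def V_def reduced_gmul even_length_gmul)
  ultimately show ?thesis
    using \<open>subgroup H G2\<close> by (auto simp: period_le_2_def)
qed

lemma S_subset_if_unique_extension:
  assumes "unique_extension_property J1 J2"
  shows "S J1 J2 \<subseteq> {1, 3}"
  using not_unique_extension_if_C2_or_C4 assms by (fastforce simp: S_def)

theorem lemma5p2:
  fixes J1 J2 :: real
  assumes "\<forall>x\<in>V. \<forall>\<sigma>\<in>unit_ball x \<rightarrow>\<^sub>E {-1, 1}. in_CS J1 J2 \<sigma> x \<longrightarrow>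
             (\<forall>y\<in>V. adjacent x y \<longrightarrow>
                (\<exists>!\<tau>. \<tau> \<in> unit_ball y \<rightarrow>\<^sub>E {-1, 1} \<and> in_CS J1 J2 \<tau> y
                       \<and> \<tau> x = \<sigma> x \<and> \<tau> y = \<sigma> y))"
  shows "\<forall>a. ground_state J1 J2 a \<longrightarrow> period_le_2 a"
proof (intro allI impI)
  fix a assume gs: "ground_state J1 J2 a"
  have S_1_3: "S J1 J2 \<subseteq> {1, 3}"
    using assms by (intro S_subset_if_unique_extension) (simp add: unique_extension_property_def)
  have "\<forall>x\<in>V. \<forall>p q. a (rmul x p) = a (rmul x q)"
  proof (intro ballI allI)
    fix x p q assume x: "x \<in> V"
    have "a ` unit_ball x \<subseteq> {-1, 1}"
      using gs by (auto simp: ground_state_def unit_ball_def)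
    moreover have "in_class 1 a x \<or> in_class 3 a x"
      using ground_state_in_CS[OF gs x] S_1_3 by (auto simp: in_CS_def)
    ultimately show "a (rmul x p) = a (rmul x q)"
      by (rule leaves_agree_if_C1_or_C3[OF x])
  qed
  then have "\<forall>u\<in>V. a u = a (if even (length u) then [] else [A1])"
    using determined_by_parity by blast
  then show "period_le_2 a"
    by (rule period_le_2_if_determined_by_parity)
qed

end
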